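(* Let $m,n\ge2$, $\lambda>0$, let $P^*=S_\lambda(C,a,b)$ for some $C\in\mathbb{R}^{m\times n}$ and strictly positive $a\in\Delta_m,b\in\Delta_n$, and let $P^{(\tau)}\in\mathbb{R}^{m\times n}$ (e.g. the output of $\tau$ Sinkhorn iterations). Let $L:\mathbb{R}^{m\times n}\to\mathbb{R}$ be twice continuously differentiable. Let $\sigma_+,\sigma_-,C_1,C_2,\epsilon>0$ be such that $\|P^*-P^{(\tau)}\|_F<\epsilon$ and, for every $P$ with $\|P-P^*\|_F<\epsilon$: $\min_{i,j}P_{i,j}\ge\sigma_-$, $\max_{i,j}P_{i,j}\le\sigma_+$, $\|\nabla L(P)\|_2\le C_1$ and $\|\nabla^2L(P)\|_F\le C_2$. Let $\kappa=\|\tilde E^\dagger\|_2$ where $\tilde E^\dagger$ is the Moore–Penrose pseudoinverse. For entrywise positive $P$ with $p=\mathrm{vec}(P)$, $D=\mathrm{diag}(p)$, $g(P)=\mathrm{vec}(\nabla L(P))$, define $$g_{ab}(P):=\bigl(\tilde E^\top D\tilde E\bigr)^{-1}\tilde E^\top D\,g(P)\in\mathbb{R}^{m+n-1},\qquad g_C(P):=-\lambda^{-1}\bigl(D\,g(P)-D\tilde E\,g_{ab}(P)\bigr)\in\mathbb{R}^{mn}.$$ Then $$\|g_{ab}(P^* )-g_{ab}(P^{(\tau)})\|_2\le\kappa\sqrt{\frac{\sigma_+}{\sigma_-}}\Bigl(\frac{C_1}{\sigma_-}+C_2\Bigr)\|P^*-P^{(\tau)}\|_F,$$ $$\|g_C(P^*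 )-g_C(P^{(\tau)})\|_2\le\lambda^{-1}\sigma_+\Bigl(\frac{C_1}{\sigma_-}+C_2\Bigr)\|P^*-P^{(\tau)}\|_F.$$
   Context: $\Delta_m=\{a\in\mathbb{R}^m: a_i\ge 0,\ \sum_i a_i=1\}$; $\Pi(a,b)=\{P\ge0: P\mathbb{1}_n=a,\ P^\top\mathbb{1}_m=b\}$; $h(P)=-\sum_{i,j}P_{i,j}(\log P_{i,j}-1)$; $S_\lambda(C,a,b)=\arg\min_{P\in\Pi(a,b)}\langle P,C\rangle_F-\lambda h(P)$. Vectorization is column-major ($\mathrm{vec}(X)_{(j-1)m+i}=X_{i,j}$). $E=[\mathbb{1}_n\otimes I_m,\ I_n\otimes\mathbb{1}_m]\in\mathbb{R}^{mn\times(m+n)}$ and $\tilde E$ is $E$ with its last column deleted. The Hessian $\nabla^2 L(P)$ is taken with respect to $\mathrm{vec}(P)$. For $P\in\Pi(a,b)$ entrywise positive, $g_{ab}(P)$ equals $[\nabla_a\ell;\nabla_{\tilde b}\ell]$ and $g_C(P)$ equals $\mathrm{vec}(\nabla_C\ell)$ as computed by the implicit backward pass (Algorithm 1, in which $\tilde E^\top D\tilde E=\begin{bmatrix}\mathrm{diag}(P\mathbb{1}_n)&P_{:,1:n-1}\\P_{:,1:n-1}^\top&\mathrm{diag}(P_{:,1:n-1}^\top\mathbb{1}_m)\end{bmatrix}$); the gradient with respect to $b$ is $[g_{\tilde b};0]$, so the same bound holds for the full $[a;b]$-gradient. *)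

theory Defs
  imports "HOL-Analysis.Analysis"
begin

text \<open>An m x n matrix is an element of real^'c^'r with row index type 'r
 (m = CARD('r)) and column index type 'c option (n = CARD('c option) = CARD('c) + 1).
 The column index None plays the role of the last column n, i.e. the one whose
 b-coordinate is dropped in E-tilde. vec(P) is a vector indexed by 'r x 'c option
 (entry (i,j) = P_ij); the ordering of the mn coordinates is immaterial for all norms.
 Vectors in R^(m+n) are indexed by 'r + 'c option, vectors in R^(m+n-1) by 'r + 'c.\<close>

definition prob_simplex :: "('i::finite \<Rightarrow> real) \<Rightarrow> bool" where
  "prob_simplex a \<longleftrightarrow> (\<forall>i. a i \<ge> 0) \<and> (\<Sum>i\<in>UNIV. a i) = 1"

definition transport_polytope ::
  "real^'r::finite \<Rightarrow> real^'k::finite \<Rightarrow> (real^'k^'r) set" where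
  "transport_polytope a b = {P. (\<forall>i j. P$i$j \<ge> 0)
      \<and> (\<forall>i. (\<Sum>j\<in>UNIV. P$i$j) = a$i) \<and> (\<forall>j. (\<Sum>i\<in>UNIV. P$i$j) = b$j)}"

definition entropy :: "real^'k::finite^'r::finite \<Rightarrow> real" where
  "entropy P = - (\<Sum>i\<in>UNIV. \<Sum>j\<in>UNIV. P$i$j * (ln (P$i$j) - 1))"

definition frob_inner :: "real^'k::finite^'r::finite \<Rightarrow> real^'k^'r \<Rightarrow> real" where
  "frob_inner P C = (\<Sum>i\<in>UNIV. \<Sum>j\<in>UNIV. P$i$j * C$i$j)"

definition sinkhorn_plan ::
  "real \<Rightarrow> real^'k::finite^'r::finite \<Rightarrow> real^'r \<Rightarrow> real^'k \<Rightarrow> real^'k^'r" where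
  "sinkhorn_plan lam C a b = (THE P. P \<in> transport_polytope a b \<and>
     (\<forall>Q\<in>transport_polytope a b.
        frob_inner P C - lam * entropy P \<le> frob_inner Q C - lam * entropy Q))"

text \<open>Gradient nabla L(P) (a matrix, w.r.t. the Frobenius inner product, which is the
 inner product of real^'k^'r) and Frobenius norm of the Hessian w.r.t. vec(P).\<close>
definition grad :: "(real^'k::finite^'r::finite \<Rightarrow> real) \<Rightarrow> real^'k^'r \<Rightarrow> real^'k^'r" where
  "grad L P = (THE G. (L has_derivative (\<lambda>X. G \<bullet> X)) (at P))"

definition hessian_frob :: "(real^'k::finite^'r::finite \<Rightarrow> real) \<Rightarrow> real^'k^'r \<Rightarrow> real" where
  "hessian_frob L P = sqrt (\<Sum>(k,l)\<in>UNIV.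
      (norm (frechet_derivative (grad L) (at P) (axis k (axis l 1))))\<^sup>2)"

definition twice_cont_diff :: "(real^'k::finite^'r::finite \<Rightarrow> real) \<Rightarrow> bool" where
  "twice_cont_diff L \<longleftrightarrow> (\<forall>P. L differentiable (at P)) \<and> (\<forall>P. grad L differentiable (at P))
     \<and> (\<forall>X. continuous_on UNIV (\<lambda>P. frechet_derivative (grad L) (at P) X))"

definition vecm :: "real^'k::finite^'r::finite \<Rightarrow> real^('r \<times> 'k)" where
  "vecm P = (\<chi> x. P $ fst x $ snd x)"

definition diagm :: "real^'i::finite \<Rightarrow> real^'i^'i" where
  "diagm p = (\<chi> i j. if i = j then p$i else 0)"

text \<open>E = [1_n (x) I_m, I_n (x) 1_m]\<close>
definition Emat :: "real^('r::finite + 'c::finite option)^('r \<times> 'c option)" where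
  "Emat = (\<chi> x c. case x of (i,j) \<Rightarrow> case c of Inl i' \<Rightarrow> (if i = i' then 1 else 0)
                                | Inr j' \<Rightarrow> (if j = j' then 1 else 0))"

definition Etil :: "real^('r::finite + 'c::finite)^('r \<times> 'c option)" where
  "Etil = (\<chi> x c. case x of (i,j) \<Rightarrow> case c of Inl i' \<Rightarrow> (if i = i' then 1 else 0)
                                | Inr k \<Rightarrow> (if j = Some k then 1 else 0))"

lemma Etil_is_E_without_last_column:
  "Etil $ x $ Inl i = Emat $ x $ Inl i" "Etil $ x $ Inr k = Emat $ x $ Inr (Some k)"
  by (cases x; simp add: Etil_def Emat_def)+

definition pinv :: "real^'b::finite^'a::finite \<Rightarrow> real^'a^'b" where
  "pinv A = (THE X. A ** X ** A = A \<and> X ** A ** X = X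
                  \<and> transpose (A ** X) = A ** X \<and> transpose (X ** A) = X ** A)"

definition op2norm :: "real^'b::finite^'a::finite \<Rightarrow> real" where
  "op2norm A = onorm (\<lambda>x. A *v x)"

definition g_ab :: "(real^'c::finite option^'r::finite \<Rightarrow> real) \<Rightarrow> real^'c option^'r
                    \<Rightarrow> real^('r + 'c)" where
  "g_ab L P = (let D = diagm (vecm P); g = vecm (grad L P) in
      matrix_inv (transpose (Etil::real^('r + 'c)^('r \<times> 'c option)) ** D ** Etil)
        *v (transpose (Etil::real^('r + 'c)^('r \<times> 'c option)) ** D *v g))"

definition g_C :: "real \<Rightarrow> (real^'c::finite option^'r::finite \<Rightarrow> real) \<Rightarrow> real^'c option^'r
                    \<Rightarrow> real^('r \<times> 'c option)" where
  "g_C lam L P = (let D = diagm (vecm P); g = vecm (grad L P) in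
      - (1 / lam) *\<^sub>R (D *v g - (D ** (Etil::real^('r + 'c)^('r \<times> 'c option))) *v g_ab L P))"

end

theory Submission
  imports Defs
begin

text \<open>With \<open>D = diag(p)\<close>, \<open>g_ab(P)\<close> is the coefficient vector of the \<open>D\<close>-weighted least-squares
 projection of \<open>g\<close> onto the range of \<open>Etil\<close>, and \<open>-\<lambda> g_C(P) = D r\<close> for the residual
 \<open>r = g - Etil g_ab(P)\<close>, which is \<open>D\<close>-orthogonal to that range. Both bounds come from one estimate:
 if \<open>w = s + Etil y\<close> with \<open>s\<close> \<open>D\<close>-orthogonal to the range, weighted Pythagoras bounds
 \<open>\<sigma>\<^sub>-\<parallel>Etil y\<parallel>\<^sup>2\<close> and \<open>\<parallel>D s\<parallel>\<^sup>2/\<sigma>\<^sub>+\<close> by the weighted norm of \<open>w\<close>, and \<open>\<parallel>y\<parallel> \<le> \<kappa>\<parallel>Etil y\<parallel>\<close> because the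
 pseudoinverse of the injective \<open>Etil\<close> is a left inverse. A change of \<open>g\<close> is itself such a \<open>w\<close>;
 a change of the weights from \<open>p\<close> to \<open>p'\<close> is captured by \<open>w = (p - p') r'/p\<close> (entrywise), with
 \<open>r'\<close> the residual for \<open>p'\<close>. Finally \<open>\<nabla>L\<close> is \<open>C\<^sub>2\<close>-Lipschitz on the ball, as the operator norm
 of the Hessian is at most its Frobenius norm.\<close>

lemma norm_sq_vec: "(norm (x::real^'n::finite))\<^sup>2 = (\<Sum>i\<in>UNIV. (x$i)\<^sup>2)"
  by (simp add: norm_vec_def L2_set_def sum_nonneg)

lemma norm_sq_matrix:
  "(norm (P::real^'c::finite^'r::finite))\<^sup>2 = (\<Sum>i\<in>UNIV. \<Sum>j\<in>UNIV. (P$i$j)\<^sup>2)"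
  by (simp add: norm_vec_def L2_set_def sum_nonneg)

lemma sum_UNIV_prod:
  "(\<Sum>x\<in>(UNIV::('a::finite \<times> 'b::finite) set). f x) = (\<Sum>i\<in>UNIV. \<Sum>j\<in>UNIV. f (i,j))"
  using sum.cartesian_product[of "\<lambda>i j. f (i,j)" UNIV UNIV] by simp

lemma norm_vecm: "norm (vecm P) = norm P"
proof -
  have "(norm (vecm P))\<^sup>2 = (norm P)\<^sup>2"
    by (simp add: norm_sq_vec norm_sq_matrix vecm_def sum_UNIV_prod)
  then show ?thesis by (simp add: power2_eq_iff_nonneg)
qed

lemma vecm_diff: "vecm (P - Q) = vecm P - vecm Q"
  by (simp add: vecm_def vec_eq_iff)

lemma diagm_mult_vec_nth: "(diagm p *v x) $ k = p $ k * (x $ k :: real)"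
proof -
  have "(diagm p *v x) $ k = (\<Sum>j\<in>UNIV. if k = j then p$k * x$j else 0)"
    unfolding diagm_def matrix_vector_mult_def vec_lambda_beta by (rule sum.cong) auto
  then show ?thesis by simp
qed

lemma Etil_mult_vec_nth:
  "((Etil::real^('r::finite + 'c::finite)^('r \<times> 'c option)) *v y) $ (i,j)
     = y $ Inl i + (case j of None \<Rightarrow> 0 | Some k \<Rightarrow> y $ Inr k)"
  by (cases j) (simp_all add: Etil_def matrix_vector_mult_def UNIV_Plus_UNIV[symmetric] sum.Plus
      if_distrib[of "\<lambda>c. c * _"] cong: if_cong del: UNIV_Plus_UNIV)

lemma Etil_injective: "inj ((*v) (Etil::real^('r::finite + 'c::finite)^('r \<times> 'c option)))"
  unfolding vec.inj_iff_eq_0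
proof (intro allI impI)
  fix y :: "real^('r + 'c)"
  assume y: "Etil *v y = (0 :: real^('r \<times> 'c option))"
  have Inl: "y $ Inl i = 0" for i
    using arg_cong[OF y, of "\<lambda>v. v $ (i, None)"] by (simp add: Etil_mult_vec_nth)
  have Inr: "y $ Inr k = 0" for k
    using arg_cong[OF y, of "\<lambda>v. v $ (undefined, Some k)"] Inl by (simp add: Etil_mult_vec_nth)
  show "y = 0" unfolding vec_eq_iff using Inl Inr by (metis sum.exhaust zero_index)
qed

lemma inner_transpose_mult_vec: "(x::real^'n::finite) \<bullet> (transpose A *v v) = (A *v x) \<bullet> v"
  by (metis dot_lmul_matrix inner_commute transpose_matrix_vector)

lemma le_sqrt_mult_if_power2_le:
  fixes a b c :: real
  assumes "a\<^sup>2 \<le> c * b\<^sup>2" "0 \<le> b"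
  shows "a \<le> sqrt c * b"
proof -
  have "a \<le> sqrt (a\<^sup>2)" by simp
  also have "\<dots> \<le> sqrt (c * b\<^sup>2)" using assms(1) by (rule real_sqrt_le_mono)
  also have "\<dots> = sqrt c * b" using assms(2) by (simp add: real_sqrt_mult)
  finally show ?thesis .
qed

subsection \<open>Weighted least squares\<close>

definition weighted_sq_norm :: "real^'n::finite \<Rightarrow> real^'n \<Rightarrow> real" where
  "weighted_sq_norm p u = (\<Sum>k\<in>UNIV. p$k * (u$k)\<^sup>2)"

lemma weighted_sq_norm_ge: "(\<And>k. sm \<le> p$k) \<Longrightarrow> sm * (norm u)\<^sup>2 \<le> weighted_sq_norm p u"
  unfolding weighted_sq_norm_def norm_sq_vec sum_distrib_left
  by (rule sum_mono) (simp add: mult_right_mono)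

lemma weighted_sq_norm_le: "(\<And>k. p$k \<le> sp) \<Longrightarrow> weighted_sq_norm p u \<le> sp * (norm u)\<^sup>2"
  unfolding weighted_sq_norm_def norm_sq_vec sum_distrib_left
  by (rule sum_mono) (simp add: mult_right_mono)

lemma weighted_sq_norm_nonneg: "(\<And>k. 0 \<le> p$k) \<Longrightarrow> 0 \<le> weighted_sq_norm p u"
  unfolding weighted_sq_norm_def by (rule sum_nonneg) simp

lemma norm_diagm_mult_sq_le:
  assumes "\<And>k. 0 \<le> p$k" "\<And>k. p$k \<le> sp"
  shows "(norm (diagm p *v u))\<^sup>2 \<le> sp * weighted_sq_norm p u"
  unfolding weighted_sq_norm_def norm_sq_vec sum_distrib_left diagm_mult_vec_nth
proof (rule sum_mono)
  fix k
  have "p$k * (p$k * (u$k)\<^sup>2) \<le> sp * (p$k * (u$k)\<^sup>2)"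
    using assms by (intro mult_right_mono) auto
  then show "(p$k * u$k)\<^sup>2 \<le> sp * (p$k * (u$k)\<^sup>2)" by (simp add: power2_eq_square mult_ac)
qed

lemma inner_weighted_gram:
  "x \<bullet> ((transpose A ** diagm p ** A) *v x) = weighted_sq_norm p (A *v x)"
proof -
  have "(transpose A ** diagm p ** A) *v x = transpose A *v (diagm p *v (A *v x))"
    by (simp add: matrix_vector_mul_assoc matrix_mul_assoc)
  then have "x \<bullet> ((transpose A ** diagm p ** A) *v x) = (A *v x) \<bullet> (diagm p *v (A *v x))"
    by (simp only: inner_transpose_mult_vec)
  then show ?thesis
    by (simp add: inner_vec_def diagm_mult_vec_nth weighted_sq_norm_def power2_eq_square mult_ac)
qed

lemma invertible_weighted_gram:
  fixes A :: "real^'k::finite^'n::finite"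
  assumes inj: "inj ((*v) A)" and p: "\<And>k. p$k > 0"
  shows "invertible (transpose A ** diagm p ** A)"
proof -
  have "x = 0" if "(transpose A ** diagm p ** A) *v x = 0" for x
  proof -
    have "weighted_sq_norm p (A *v x) = 0"
      using inner_weighted_gram[of x A p] that by simp
    then have "\<forall>k\<in>UNIV. p$k * ((A *v x)$k)\<^sup>2 = 0"
      unfolding weighted_sq_norm_def
      by (subst (asm) sum_nonneg_eq_0_iff) (auto simp: less_imp_le[OF p])
    then have "A *v x = 0" using p by (simp add: vec_eq_iff) (metis less_irrefl)
    then show ?thesis using inj by (simp add: vec.inj_iff_eq_0)
  qed
  then show ?thesis
    unfolding invertible_left_inverse by (simp add: matrix_left_invertible_ker)
qed

lemma matrix_inv_mult:
  fixes A :: "'a::semiring_1^'n::finite^'n"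
  assumes "invertible A"
  shows "A ** matrix_inv A = mat 1" "matrix_inv A ** A = mat 1"
  using someI_ex[OF assms[unfolded invertible_def]] unfolding matrix_inv_def by auto

definition wls_coeff :: "real^'k::finite^'n::finite \<Rightarrow> real^'n \<Rightarrow> real^'n \<Rightarrow> real^'k" where
  "wls_coeff A p g = matrix_inv (transpose A ** diagm p ** A) *v (transpose A ** diagm p *v g)"

definition wls_residual :: "real^'k::finite^'n::finite \<Rightarrow> real^'n \<Rightarrow> real^'n \<Rightarrow> real^'n" where
  "wls_residual A p g = g - A *v wls_coeff A p g"

lemma wls_coeff_diff: "wls_coeff A p (g1 - g2) = wls_coeff A p g1 - wls_coeff A p g2"
  by (simp add: wls_coeff_def matrix_vector_mult_diff_distrib)

lemma wls_residual_diff: "wls_residual A p (g1 - g2) = wls_residual A p g1 - wls_residual A p g2"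
  by (simp add: wls_residual_def wls_coeff_diff matrix_vector_mult_diff_distrib)

lemma wls_residual_orthogonal:
  fixes A :: "real^'k::finite^'n::finite"
  assumes "inj ((*v) A)" "\<And>k. p$k > 0"
  shows "transpose A *v (diagm p *v wls_residual A p g) = 0"
proof -
  let ?M = "transpose A ** diagm p ** A"
  have "?M *v wls_coeff A p g = (?M ** matrix_inv ?M) *v (transpose A ** diagm p *v g)"
    by (simp add: wls_coeff_def matrix_vector_mul_assoc matrix_mul_assoc)
  also have "\<dots> = transpose A ** diagm p *v g"
    by (simp add: matrix_inv_mult(1)[OF invertible_weighted_gram[OF assms]])
  finally show ?thesis
    by (simp add: wls_residual_def matrix_vector_mult_diff_distrib matrix_vector_mul_assoc
        matrix_mul_assoc)
qed

lemma weighted_pythagoras: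
  fixes A :: "real^'k::finite^'n::finite"
  assumes "transpose A *v (diagm p *v s) = 0"
  shows "weighted_sq_norm p (s + A *v y) = weighted_sq_norm p s + weighted_sq_norm p (A *v y)"
proof -
  have "(A *v y) \<bullet> (diagm p *v s) = 0"
    using assms by (simp flip: inner_transpose_mult_vec)
  then have cross: "(\<Sum>k\<in>UNIV. p$k * (s$k * (A *v y)$k)) = 0"
    by (simp add: inner_vec_def diagm_mult_vec_nth mult_ac)
  have "weighted_sq_norm p (s + A *v y) = weighted_sq_norm p s + weighted_sq_norm p (A *v y)
          + 2 * (\<Sum>k\<in>UNIV. p$k * (s$k * (A *v y)$k))"
    unfolding weighted_sq_norm_def by (simp add: power2_sum algebra_simps sum.distrib sum_distrib_left)
  then show ?thesis using cross by simp
qed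

subsection \<open>The Moore-Penrose pseudoinverse of an injective matrix\<close>

definition penrose :: "real^'b::finite^'a::finite \<Rightarrow> real^'a^'b \<Rightarrow> bool" where
  "penrose A X \<longleftrightarrow> A ** X ** A = A \<and> X ** A ** X = X
                  \<and> transpose (A ** X) = A ** X \<and> transpose (X ** A) = X ** A"

lemma left_inverse_if_mult_right_cancel:
  fixes A :: "real^'k::finite^'n::finite"
  assumes inj: "inj ((*v) A)" and AXA: "A ** X ** A = A"
  shows "X ** A = mat 1"
proof -
  have "(X ** A) *v y = y" for y
  proof -
    have "A *v ((X ** A) *v y) = A *v y"
      using AXA by (simp add: matrix_vector_mul_assoc matrix_mul_assoc)
    then show ?thesis using inj by (simp add: inj_eq)
  qed
  then show ?thesis by (metis matrix_eq matrix_vector_mul_lid)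
qed

lemma penrose_unique:
  fixes A :: "real^'k::finite^'n::finite"
  assumes inj: "inj ((*v) A)" and X: "penrose A X" and Y: "penrose A Y"
  shows "X = Y"
proof -
  have XA: "X ** A = mat 1"
    using left_inverse_if_mult_right_cancel[OF inj] X unfolding penrose_def by auto
  have AX: "transpose (A ** X) = A ** X" and AY: "transpose (A ** Y) = A ** Y"
    and AYA: "A ** Y ** A = A"
    using X Y unfolding penrose_def by auto
  have "A ** X = transpose ((A ** Y) ** (A ** X))"
    by (metis AX AYA matrix_mul_assoc)
  also have "\<dots> = (A ** X) ** (A ** Y)"
    by (simp only: matrix_transpose_mul[of "A ** Y" "A ** X"] AX AY)
  also have "\<dots> = A ** (X ** A) ** Y"
    by (simp add: matrix_mul_assoc)
  finally have AXY: "A ** X = A ** Y" by (simp add: XA)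
  have "X = X ** (A ** X)" by (metis XA matrix_mul_assoc matrix_mul_lid)
  also have "\<dots> = Y" by (metis AXY XA matrix_mul_assoc matrix_mul_lid)
  finally show ?thesis .
qed

lemma penrose_normal_equations:
  fixes A :: "real^'k::finite^'n::finite"
  assumes inj: "inj ((*v) A)"
  shows "penrose A (matrix_inv (transpose A ** A) ** transpose A)"
proof -
  let ?S = "transpose A ** A"
  let ?G = "matrix_inv ?S"
  have "invertible (transpose A ** diagm 1 ** A)"
    by (rule invertible_weighted_gram) (auto intro: inj)
  moreover have "diagm 1 = (mat 1 :: real^'n^'n)"
    by (simp add: diagm_def mat_def vec_eq_iff)
  ultimately have inv: "invertible ?S" by simp
  have SG: "?S ** ?G = mat 1" and GS: "?G ** ?S = mat 1" using matrix_inv_mult[OF inv] by auto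
  have St: "transpose ?S = ?S" by (simp add: matrix_transpose_mul)
  have "transpose ?G ** ?S = mat 1"
    using arg_cong[OF SG, of transpose] by (simp add: matrix_transpose_mul St)
  then have Gt: "transpose ?G = ?G"
    by (metis SG matrix_mul_assoc matrix_mul_lid matrix_mul_rid)
  have XA: "?G ** transpose A ** A = mat 1" using GS by (simp add: matrix_mul_assoc)
  show ?thesis unfolding penrose_def
    by (simp add: XA matrix_transpose_mul Gt matrix_mul_assoc)
      (metis XA matrix_mul_assoc matrix_mul_lid matrix_mul_rid)
qed

lemma pinv_mult_left:
  fixes A :: "real^'k::finite^'n::finite"
  assumes inj: "inj ((*v) A)"
  shows "pinv A ** A = mat 1"
proof -
  have "\<exists>!X. penrose A X"
    using penrose_normal_equations[OF inj] penrose_unique[OF inj] by blast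
  then have "penrose A (pinv A)"
    unfolding pinv_def penrose_def by (rule theI')
  then show ?thesis using left_inverse_if_mult_right_cancel[OF inj] unfolding penrose_def by blast
qed

lemma op2norm_nonneg: "0 \<le> op2norm (B::real^'n::finite^'m::finite)"
  unfolding op2norm_def by (rule onorm_pos_le) (simp add: matrix_vector_mul_bounded_linear)

lemma norm_le_op2norm_pinv:
  fixes A :: "real^'k::finite^'n::finite"
  assumes "inj ((*v) A)"
  shows "norm y \<le> op2norm (pinv A) * norm (A *v y)"
proof -
  have "y = pinv A *v (A *v y)" by (simp add: matrix_vector_mul_assoc pinv_mult_left[OF assms])
  then show ?thesis
    unfolding op2norm_def by (metis onorm matrix_vector_mul_bounded_linear)
qed

subsection \<open>Perturbation bounds\<close>

lemma orthogonal_split_bounds: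
  fixes A :: "real^'k::finite^'n::finite"
  assumes inj: "inj ((*v) A)"
    and orth: "transpose A *v (diagm p *v s) = 0"
    and lo: "\<And>k. sm \<le> p$k" and hi: "\<And>k. p$k \<le> sp" and sm: "sm > 0"
    and w: "weighted_sq_norm p (s + A *v y) \<le> sp * c\<^sup>2" and c: "c \<ge> 0"
  shows "norm y \<le> op2norm (pinv A) * sqrt (sp / sm) * c"
    and "norm (diagm p *v s) \<le> sp * c"
proof -
  have p: "0 \<le> p$k" for k using lo[of k] sm by linarith
  have sp: "sp > 0" using lo hi sm by (meson less_le_trans)
  note pyth = weighted_pythagoras[OF orth, of y]
  have "sm * (norm (A *v y))\<^sup>2 \<le> sp * c\<^sup>2"
    using weighted_sq_norm_ge[OF lo, of "A *v y"] weighted_sq_norm_nonneg[OF p, of s] pyth w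
    by linarith
  then have "(norm (A *v y))\<^sup>2 \<le> (sp / sm) * c\<^sup>2"
    using sm by (simp add: field_simps)
  then have "norm (A *v y) \<le> sqrt (sp / sm) * c"
    using c by (rule le_sqrt_mult_if_power2_le)
  then show "norm y \<le> op2norm (pinv A) * sqrt (sp / sm) * c"
    using norm_le_op2norm_pinv[OF inj, where y = y] op2norm_nonneg[of "pinv A"]
    by (metis mult.assoc mult_left_mono order_trans)
  have "(norm (diagm p *v s))\<^sup>2 \<le> sp * weighted_sq_norm p s"
    by (rule norm_diagm_mult_sq_le[OF p hi])
  also have "\<dots> \<le> sp\<^sup>2 * c\<^sup>2"
    using pyth w weighted_sq_norm_nonneg[OF p, of "A *v y"] sp
    by (simp add: power2_eq_square mult_left_mono)
  finally have "norm (diagm p *v s) \<le> sqrt (sp\<^sup>2) * c"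
    using c by (intro le_sqrt_mult_if_power2_le) auto
  then show "norm (diagm p *v s) \<le> sp * c" using sp by simp
qed

lemma wls_perturbation_data:
  fixes A :: "real^'k::finite^'n::finite"
  assumes inj: "inj ((*v) A)"
    and lo: "\<And>k. sm \<le> p$k" and hi: "\<And>k. p$k \<le> sp" and sm: "sm > 0"
  shows "norm (wls_coeff A p d) \<le> op2norm (pinv A) * sqrt (sp / sm) * norm d"
    and "norm (diagm p *v wls_residual A p d) \<le> sp * norm d"
proof -
  have p: "p$k > 0" for k using lo[of k] sm by linarith
  have "d = wls_residual A p d + A *v wls_coeff A p d" by (simp add: wls_residual_def)
  then have "weighted_sq_norm p (wls_residual A p d + A *v wls_coeff A p d) \<le> sp * (norm d)\<^sup>2"
    using weighted_sq_norm_le[OF hi] by metis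
  from orthogonal_split_bounds[OF inj wls_residual_orthogonal[OF inj p] lo hi sm this norm_ge_zero]
  show "norm (wls_coeff A p d) \<le> op2norm (pinv A) * sqrt (sp / sm) * norm d"
    and "norm (diagm p *v wls_residual A p d) \<le> sp * norm d" .
qed

lemma norm_wls_residual_sq_le:
  fixes A :: "real^'k::finite^'n::finite"
  assumes inj: "inj ((*v) A)"
    and lo: "\<And>k. sm \<le> p$k" and hi: "\<And>k. p$k \<le> sp" and sm: "sm > 0"
  shows "(norm (wls_residual A p g))\<^sup>2 \<le> sp / sm * (norm g)\<^sup>2"
proof -
  have p: "p$k > 0" for k using lo[of k] sm by linarith
  have "g = wls_residual A p g + A *v wls_coeff A p g" by (simp add: wls_residual_def)
  then have "weighted_sq_norm p g = weighted_sq_norm p (wls_residual A p g)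
                + weighted_sq_norm p (A *v wls_coeff A p g)"
    using weighted_pythagoras[OF wls_residual_orthogonal[OF inj p]] by metis
  moreover have "0 \<le> weighted_sq_norm p (A *v wls_coeff A p g)"
    using p by (simp add: weighted_sq_norm_nonneg less_imp_le)
  ultimately have "sm * (norm (wls_residual A p g))\<^sup>2 \<le> sp * (norm g)\<^sup>2"
    using weighted_sq_norm_ge[OF lo, of "wls_residual A p g"] weighted_sq_norm_le[OF hi, of g]
    by linarith
  then show ?thesis using sm by (simp add: field_simps)
qed

lemma wls_perturbation_weights:
  fixes A :: "real^'k::finite^'n::finite"
  assumes inj: "inj ((*v) A)"
    and lo1: "\<And>k. sm \<le> p1$k" and hi1: "\<And>k. p1$k \<le> sp"
    and lo2: "\<And>k. sm \<le> p2$k" and hi2: "\<And>k. p2$k \<le> sp" and sm: "sm > 0"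
    and g: "norm g \<le> C1"
  shows "norm (wls_coeff A p1 g - wls_coeff A p2 g)
           \<le> op2norm (pinv A) * sqrt (sp / sm) * (C1 / sm * norm (p1 - p2))"
    and "norm (diagm p1 *v wls_residual A p1 g - diagm p2 *v wls_residual A p2 g)
           \<le> sp * (C1 / sm * norm (p1 - p2))"
proof -
  have p1: "p1$k > 0" and p2: "p2$k > 0" for k using lo1[of k] lo2[of k] sm by linarith+
  have C1: "C1 \<ge> 0" using g norm_ge_zero order_trans by blast
  have sp: "sp > 0" using lo1 hi1 sm by (meson less_le_trans)
  define r1 where "r1 = wls_residual A p1 g"
  define r2 where "r2 = wls_residual A p2 g"
  define z where "z = wls_coeff A p1 g - wls_coeff A p2 g"
  define w where "w = (\<chi> k. (p1$k - p2$k) * r2$k / p1$k)"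
  define s where "s = w - A *v z"
  have Ds: "diagm p1 *v s = diagm p1 *v r1 - diagm p2 *v r2"
  proof -
    have "A *v z = r2 - r1"
      by (simp add: z_def r1_def r2_def wls_residual_def matrix_vector_mult_diff_distrib)
    moreover have "p1$k * (w$k - (r2$k - r1$k)) = p1$k * r1$k - p2$k * r2$k" for k
      using p1[of k] by (simp add: w_def field_simps)
    ultimately show ?thesis by (simp add: vec_eq_iff diagm_mult_vec_nth s_def)
  qed
  have orth: "transpose A *v (diagm p1 *v s) = 0"
    using wls_residual_orthogonal[OF inj p1, of g] wls_residual_orthogonal[OF inj p2, of g]
    by (simp add: Ds matrix_vector_mult_diff_distrib r1_def r2_def)
  have "weighted_sq_norm p1 w \<le> (\<Sum>k\<in>UNIV. (p1$k - p2$k)\<^sup>2 * ((norm r2)\<^sup>2 / sm))"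
    unfolding weighted_sq_norm_def
  proof (rule sum_mono)
    fix k
    have "(r2$k)\<^sup>2 \<le> (norm r2)\<^sup>2"
      using component_le_norm_cart[of r2 k] by (metis abs_ge_zero power2_abs power_mono)
    then have "(r2$k)\<^sup>2 / p1$k \<le> (norm r2)\<^sup>2 / sm"
      using lo1[of k] sm by (intro frac_le) auto
    moreover have "p1$k * (w$k)\<^sup>2 = (p1$k - p2$k)\<^sup>2 * ((r2$k)\<^sup>2 / p1$k)"
      using p1[of k] by (simp add: w_def power2_eq_square field_simps)
    ultimately show "p1$k * (w$k)\<^sup>2 \<le> (p1$k - p2$k)\<^sup>2 * ((norm r2)\<^sup>2 / sm)"
      by (metis mult_left_mono zero_le_power2)
  qed
  also have "\<dots> = (norm (p1 - p2))\<^sup>2 * ((norm r2)\<^sup>2 / sm)"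
    by (simp add: norm_sq_vec[of "p1 - p2"] sum_distrib_right sum_divide_distrib)
  also have "\<dots> \<le> (norm (p1 - p2))\<^sup>2 * (sp / sm * C1\<^sup>2 / sm)"
  proof -
    have "sp / sm * (norm g)\<^sup>2 \<le> sp / sm * C1\<^sup>2"
      using g sm sp by (intro mult_left_mono power_mono) auto
    then have "(norm r2)\<^sup>2 \<le> sp / sm * C1\<^sup>2"
      using norm_wls_residual_sq_le[OF inj lo2 hi2 sm, of g] by (simp add: r2_def)
    then show ?thesis using sm by (intro mult_left_mono divide_right_mono) auto
  qed
  also have "\<dots> = sp * (C1 / sm * norm (p1 - p2))\<^sup>2"
    by (simp add: power2_eq_square)
  finally have "weighted_sq_norm p1 (s + A *v z) \<le> sp * (C1 / sm * norm (p1 - p2))\<^sup>2"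
    by (simp add: s_def)
  from orthogonal_split_bounds[OF inj orth lo1 hi1 sm this] sm C1
  show "norm (wls_coeff A p1 g - wls_coeff A p2 g)
          \<le> op2norm (pinv A) * sqrt (sp / sm) * (C1 / sm * norm (p1 - p2))"
    and "norm (diagm p1 *v wls_residual A p1 g - diagm p2 *v wls_residual A p2 g)
          \<le> sp * (C1 / sm * norm (p1 - p2))"
    by (simp_all add: z_def Ds r1_def r2_def)
qed

lemma wls_lipschitz:
  fixes A :: "real^'k::finite^'n::finite"
  assumes inj: "inj ((*v) A)"
    and lo1: "\<And>k. sm \<le> p1$k" and hi1: "\<And>k. p1$k \<le> sp"
    and lo2: "\<And>k. sm \<le> p2$k" and hi2: "\<And>k. p2$k \<le> sp" and sm: "sm > 0"
    and g2: "norm g2 \<le> C1" and dg: "norm (g1 - g2) \<le> C2 * norm (p1 - p2)"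
  shows "norm (wls_coeff A p1 g1 - wls_coeff A p2 g2)
           \<le> op2norm (pinv A) * sqrt (sp / sm) * (C1 / sm + C2) * norm (p1 - p2)"
    and "norm (diagm p1 *v wls_residual A p1 g1 - diagm p2 *v wls_residual A p2 g2)
           \<le> sp * (C1 / sm + C2) * norm (p1 - p2)"
proof -
  have sp: "sp \<ge> 0" using lo1 hi1 sm by (meson less_le_trans less_imp_le)
  have k: "op2norm (pinv A) * sqrt (sp / sm) \<ge> 0"
    using op2norm_nonneg[of "pinv A"] sp sm by simp
  note data = wls_perturbation_data[OF inj lo1 hi1 sm, of "g1 - g2"]
  note weights = wls_perturbation_weights[OF inj lo1 hi1 lo2 hi2 sm g2]
  have "wls_coeff A p1 g1 - wls_coeff A p2 g2
          = wls_coeff A p1 (g1 - g2) + (wls_coeff A p1 g2 - wls_coeff A p2 g2)"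
    by (simp add: wls_coeff_diff)
  then have "norm (wls_coeff A p1 g1 - wls_coeff A p2 g2)
      \<le> norm (wls_coeff A p1 (g1 - g2)) + norm (wls_coeff A p1 g2 - wls_coeff A p2 g2)"
    by (metis norm_triangle_ineq)
  then have "norm (wls_coeff A p1 g1 - wls_coeff A p2 g2)
      \<le> op2norm (pinv A) * sqrt (sp / sm) * (C2 * norm (p1 - p2))
         + op2norm (pinv A) * sqrt (sp / sm) * (C1 / sm * norm (p1 - p2))"
    using data(1) weights(1) mult_left_mono[OF dg k] by linarith
  then show "norm (wls_coeff A p1 g1 - wls_coeff A p2 g2)
           \<le> op2norm (pinv A) * sqrt (sp / sm) * (C1 / sm + C2) * norm (p1 - p2)"
    by (simp add: algebra_simps)
  have "diagm p1 *v wls_residual A p1 g1 - diagm p2 *v wls_residual A p2 g2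
          = diagm p1 *v wls_residual A p1 (g1 - g2)
            + (diagm p1 *v wls_residual A p1 g2 - diagm p2 *v wls_residual A p2 g2)"
    by (simp add: wls_residual_diff matrix_vector_mult_diff_distrib)
  then have "norm (diagm p1 *v wls_residual A p1 g1 - diagm p2 *v wls_residual A p2 g2)
      \<le> norm (diagm p1 *v wls_residual A p1 (g1 - g2))
         + norm (diagm p1 *v wls_residual A p1 g2 - diagm p2 *v wls_residual A p2 g2)"
    by (metis norm_triangle_ineq)
  then have "norm (diagm p1 *v wls_residual A p1 g1 - diagm p2 *v wls_residual A p2 g2)
      \<le> sp * (C2 * norm (p1 - p2)) + sp * (C1 / sm * norm (p1 - p2))"
    using data(2) weights(2) mult_left_mono[OF dg sp] by linarith
  then show "norm (diagm p1 *v wls_residual A p1 g1 - diagm p2 *v wls_residual A p2 g2)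
           \<le> sp * (C1 / sm + C2) * norm (p1 - p2)"
    by (simp add: algebra_simps)
qed

subsection \<open>Lipschitz continuity of the gradient\<close>

lemma matrix_eq_sum_axis:
  fixes X :: "real^'c::finite^'r::finite"
  shows "X = (\<Sum>(k,l)\<in>UNIV. X$k$l *\<^sub>R axis k (axis l 1))"
proof -
  have "(\<Sum>(k,l)\<in>UNIV. X$k$l *\<^sub>R axis k (axis l (1::real))) $ i $ j
        = (\<Sum>x\<in>UNIV. if x = (i,j) then X $ i $ j else 0)" for i j
    unfolding sum_component by (rule sum.cong) (auto simp: axis_def split: if_splits)
  then show ?thesis by (simp add: vec_eq_iff)
qed

lemma onorm_hessian_le_hessian_frob:
  fixes L :: "real^'c::finite^'r::finite \<Rightarrow> real"
  assumes "grad L differentiable (at P)"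
  shows "onorm (frechet_derivative (grad L) (at P)) \<le> hessian_frob L P"
proof (rule onorm_le)
  let ?H = "frechet_derivative (grad L) (at P)"
  let ?h = "\<lambda>(k,l). norm (?H (axis k (axis l 1)))"
  have lin: "linear ?H" using assms frechet_derivative_works has_derivative_linear by blast
  fix X :: "real^'c^'r"
  have "?H X = (\<Sum>(k,l)\<in>UNIV. X$k$l *\<^sub>R ?H (axis k (axis l 1)))"
    by (subst matrix_eq_sum_axis)
      (simp add: real_vector.linear_sum[OF lin] linear_cmul[OF lin] case_prod_beta)
  then have "norm (?H X) \<le> (\<Sum>(k,l)\<in>UNIV. \<bar>X$k$l\<bar> * \<bar>?h (k,l)\<bar>)"
    by (auto intro: order_trans[OF norm_sum] simp: case_prod_beta)
  also have "\<dots> \<le> L2_set (\<lambda>(k,l). X$k$l) UNIV * L2_set ?h UNIV"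
    using L2_set_mult_ineq[of "\<lambda>(k,l). X$k$l" ?h UNIV] by (simp add: case_prod_beta)
  also have "\<dots> = hessian_frob L P * norm X"
    unfolding L2_set_def hessian_frob_def sum_UNIV_prod
    by (simp add: norm_sq_matrix[symmetric] case_prod_beta)
  finally show "norm (?H X) \<le> hessian_frob L P * norm X" .
qed

lemma grad_lipschitz_on_convex:
  fixes L :: "real^'c::finite^'r::finite \<Rightarrow> real"
  assumes "convex S" and diff: "\<And>P. P \<in> S \<Longrightarrow> grad L differentiable (at P)"
    and hess: "\<And>P. P \<in> S \<Longrightarrow> hessian_frob L P \<le> C2" and "P \<in> S" "Q \<in> S"
  shows "norm (grad L P - grad L Q) \<le> C2 * norm (P - Q)"
proof (rule differentiable_bound[OF \<open>convex S\<close> _ _ \<open>P \<in> S\<close> \<open>Q \<in> S\<close>])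
  fix X assume "X \<in> S"
  show "(grad L has_derivative frechet_derivative (grad L) (at X)) (at X within S)"
    using diff[OF \<open>X \<in> S\<close>] frechet_derivative_works has_derivative_at_withinI by blast
  show "onorm (frechet_derivative (grad L) (at X)) \<le> C2"
    using onorm_hessian_le_hessian_frob[OF diff] hess \<open>X \<in> S\<close> by (meson order_trans)
qed

lemma g_ab_eq_wls_coeff:
  "g_ab L P = wls_coeff (Etil :: real^('r::finite + 'c::finite)^('r \<times> 'c option))
                (vecm P) (vecm (grad L P))"
  by (simp add: g_ab_def wls_coeff_def Let_def)

lemma g_C_eq_wls_residual:
  "g_C lam L P = - (1 / lam) *\<^sub>R (diagm (vecm P) *v
     wls_residual (Etil :: real^('r::finite + 'c::finite)^('r \<times> 'c option))
       (vecm P) (vecm (grad L P)))"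
  by (simp add: g_C_def wls_residual_def g_ab_def wls_coeff_def Let_def
      matrix_vector_mult_diff_distrib matrix_vector_mul_assoc matrix_mul_assoc)

theorem theorem3:
  fixes C Pstar Ptau :: "real^'c::finite option^'r::finite"
    and a :: "real^'r" and b :: "real^'c option"
    and L :: "real^'c option^'r \<Rightarrow> real"
    and lam sp sm C1 C2 eps :: real
  assumes m2: "CARD('r) \<ge> 2"
    and lam: "lam > 0"
    and a: "prob_simplex (\<lambda>i. a$i)" "\<forall>i. a$i > 0"
    and b: "prob_simplex (\<lambda>j. b$j)" "\<forall>j. b$j > 0"
    and Pstar: "Pstar = sinkhorn_plan lam C a b"
    and L: "twice_cont_diff L"
    and pos: "sp > 0" "sm > 0" "C1 > 0" "C2 > 0" "eps > 0"
    and close: "norm (Pstar - Ptau) < eps"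
    and ball: "\<forall>P. norm (P - Pstar) < eps \<longrightarrow>
                 (\<forall>i j. P$i$j \<ge> sm) \<and> (\<forall>i j. P$i$j \<le> sp)
                 \<and> norm (grad L P) \<le> C1 \<and> hessian_frob L P \<le> C2"
  shows "norm (g_ab L Pstar - g_ab L Ptau)
           \<le> op2norm (pinv (Etil :: real^('r + 'c)^('r \<times> 'c option))) * sqrt (sp / sm)
               * (C1 / sm + C2) * norm (Pstar - Ptau)
         \<and> norm (g_C lam L Pstar - g_C lam L Ptau)
           \<le> (1 / lam) * sp * (C1 / sm + C2) * norm (Pstar - Ptau)"
proof -
  let ?E = "Etil :: real^('r + 'c)^('r \<times> 'c option)"
  let ?c = "\<lambda>P. wls_coeff ?E (vecm P) (vecm (grad L P))"
  let ?Dr = "\<lambda>P. diagm (vecm P) *v wls_residual ?E (vecm P) (vecm (grad L P))"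
  have near: "norm (Pstar - Pstar) < eps" "norm (Ptau - Pstar) < eps"
    using pos(5) close by (simp_all add: norm_minus_commute)
  have box: "(\<forall>k. sm \<le> vecm P $ k) \<and> (\<forall>k. vecm P $ k \<le> sp)" if "norm (P - Pstar) < eps" for P
    using ball that by (simp add: vecm_def)
  have grad_bound: "norm (vecm (grad L Ptau)) \<le> C1"
    using ball near(2) by (simp add: norm_vecm)
  have "norm (grad L Pstar - grad L Ptau) \<le> C2 * norm (Pstar - Ptau)"
    using L ball near
    by (intro grad_lipschitz_on_convex[OF convex_ball, of Pstar eps])
      (auto simp: twice_cont_diff_def dist_norm norm_minus_commute)
  then have grad_lip: "norm (vecm (grad L Pstar) - vecm (grad L Ptau))
                         \<le> C2 * norm (vecm Pstar - vecm Ptau)"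
    by (simp flip: vecm_diff add: norm_vecm)
  have bounds: "norm (?c Pstar - ?c Ptau)
                  \<le> op2norm (pinv ?E) * sqrt (sp / sm) * (C1 / sm + C2) * norm (Pstar - Ptau)"
    "norm (?Dr Pstar - ?Dr Ptau) \<le> sp * (C1 / sm + C2) * norm (Pstar - Ptau)"
    using wls_lipschitz[OF Etil_injective _ _ _ _ pos(2) grad_bound grad_lip]
      box[OF near(1)] box[OF near(2)]
    by (auto simp flip: vecm_diff simp: norm_vecm)
  have "norm (g_C lam L Pstar - g_C lam L Ptau) = (1 / lam) * norm (?Dr Pstar - ?Dr Ptau)"
    using lam by (simp add: g_C_eq_wls_residual norm_minus_commute flip: scaleR_diff_right)
  then show ?thesis
    using bounds lam by (simp add: g_ab_eq_wls_coeff divide_right_mono)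
qed

end
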